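(* Let $p_0$ be a uniformly continuous density on $\mathbb{R}$, and let $z_{\min} := \inf\{z:p_0(z)>0\}$ and $z_{\max} := \sup\{z:p_0(z)>0\}$. Then (a) $\lim_{z\to-\infty}\psi_0^*(z)<\infty$ if and only if $\limsup_{z\searrow z_{\min}}h_0(z)<\infty$, in which case $z_{\min} = -\infty$; (b) $\lim_{z\to\infty}\psi_0^*(z)>-\infty$ if and only if $\limsup_{z\nearrow z_{\max}}h_0(z)<\infty$, in which case $z_{\max} = \infty$.
   Context: Convention $0/0:=0$. $F_0$ is the distribution function of $p_0$, $F_0^{-1}(u) := \inf\{z\in[-\infty,\infty]:F_0(z)\ge u\}$, $J_0 := p_0\circ F_0^{-1}$ on $[0,1]$, $\hat J_0$ its least concave majorant on $[0,1]$, and $\psi_0^* := \hat J_0^{(\mathrm{R})}\circ F_0\colon\mathbb{R}\to[-\infty,\infty]$ (right derivative; value at $1$ defined as the left limit). The two-sided hazard function is $h_0(z) := p_0(z)/\bigl(F_0(z)\wedge(1 - F_0(z))\bigr)$, so that $h_0(z) = 0$ whenever $F_0(z)\in\{0,1\}$. *)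

theory Defs
  imports "HOL-Analysis.Analysis"
begin

definition cdf_of :: "(real \<Rightarrow> real) \<Rightarrow> real \<Rightarrow> real" where
  "cdf_of p z = (LINT x:{..z}|lborel. p x)"

definition cdf_ext :: "(real \<Rightarrow> real) \<Rightarrow> ereal \<Rightarrow> real" where
  "cdf_ext p z = (if z = -\<infinity> then 0 else if z = \<infinity> then 1 else cdf_of p (real_of_ereal z))"

definition dens_ext :: "(real \<Rightarrow> real) \<Rightarrow> ereal \<Rightarrow> real" where
  "dens_ext p z = (if z = -\<infinity> \<or> z = \<infinity> then 0 else p (real_of_ereal z))"

definition quantile :: "(real \<Rightarrow> real) \<Rightarrow> real \<Rightarrow> ereal" where
  "quantile p u = Inf {z::ereal. cdf_ext p z \<ge> u}"

definition Jfun :: "(real \<Rightarrow> real) \<Rightarrow> real \<Rightarrow> real" where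
  "Jfun p u = dens_ext p (quantile p u)"

text \<open>Least concave majorant of J on [0,1] (pointwise infimum of all concave majorants).\<close>
definition lcm01 :: "(real \<Rightarrow> real) \<Rightarrow> real \<Rightarrow> real" where
  "lcm01 J u = Inf {g u | g. concave_on {0..1} g \<and> (\<forall>v\<in>{0..1}. J v \<le> g v)}"

definition rderiv :: "(real \<Rightarrow> real) \<Rightarrow> real \<Rightarrow> ereal" where
  "rderiv f u = Lim (at_right u) (\<lambda>v. ereal ((f v - f u) / (v - u)))"

definition rderiv01 :: "(real \<Rightarrow> real) \<Rightarrow> real \<Rightarrow> ereal" where
  "rderiv01 f u = (if u = 1 then Lim (at_left 1) (rderiv f) else rderiv f u)"

definition psi_star :: "(real \<Rightarrow> real) \<Rightarrow> real \<Rightarrow> ereal" where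
  "psi_star p z = rderiv01 (lcm01 (Jfun p)) (cdf_of p z)"

text \<open>Two-sided hazard function; Isabelle's x/0 = 0 realises the conventions 0/0 = 0
  and h_0(z) = 0 whenever F_0(z) is 0 or 1.\<close>
definition hazard2 :: "(real \<Rightarrow> real) \<Rightarrow> real \<Rightarrow> real" where
  "hazard2 p z = p z / min (cdf_of p z) (1 - cdf_of p z)"

definition zmin :: "(real \<Rightarrow> real) \<Rightarrow> ereal" where
  "zmin p = Inf {ereal z | z. p z > 0}"

definition zmax :: "(real \<Rightarrow> real) \<Rightarrow> ereal" where
  "zmax p = Sup {ereal z | z. p z > 0}"

definition from_above :: "ereal \<Rightarrow> real filter" where
  "from_above a = (if a = -\<infinity> then at_bot else at_right (real_of_ereal a))"

definition from_below :: "ereal \<Rightarrow> real filter" where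
  "from_below b = (if b = \<infinity> then at_top else at_left (real_of_ereal b))"

end

theory Submission
  imports Defs
begin

(* For 0 < u < 1 the quantile F_0^{-1}(u) is a point z with F_0(z) = u, and J_0(F_0(z)) = p_0(z)
   whenever 0 < F_0(z) < 1. Near z_min the hazard is therefore J_0(u)/u with u = F_0(z), so
   J_0(u) <= K u on (0,1) bounds it there. Conversely, once z_min = -infinity, a hazard bound on
   (-infinity, N] gives J_0(u) <= K u for u <= F_0(N), and for larger u this follows from the
   boundedness of p_0.

   As psi_0^* is decreasing, its limit at -infinity is its supremum, and psi_0^* <= (hat J_0)'(0+).
   If J_0(u) <= K u then K u is a concave majorant, so hat J_0 <= K u and all slopes of hat J_0 from
   0 are at most K. Conversely, a concave function with right derivative at most K on (0,1) that
   tends to 0 at 0 lies below K u; uniform continuity of p_0 makes J_0, hence hat J_0, vanish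
   uniformly at 0.

   If z_min were finite, p_0 <= K F_0 to the right of z_min together with F_0(z_min) = 0 would force
   p_0 = 0 there (a Gronwall argument), contradicting the definition of z_min. Part (b) is the
   mirror image. *)

lemma antimono_tendsto_at_bot_iff:
  fixes f :: "'a::linorder \<Rightarrow> 'b::{complete_linorder,linorder_topology}"
  assumes "antimono f"
  shows "(\<exists>L. (f \<longlongrightarrow> L) at_bot \<and> P L) \<longleftrightarrow> P (SUP x. f x)"
proof -
  have "(f \<longlongrightarrow> (SUP x. f x)) at_bot"
  proof (rule order_tendstoI)
    fix a assume "a < (SUP x. f x)"
    then obtain x0 where "a < f x0" by (auto simp: less_SUP_iff)
    then show "\<forall>\<^sub>F x in at_bot. a < f x"
      unfolding eventually_at_bot_linorder
      using assms by (auto intro!: exI[of _ x0] elim: less_le_trans dest: antimonoD)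
  next
    fix a assume "(SUP x. f x) < a"
    then show "\<forall>\<^sub>F x in at_bot. f x < a"
      by (auto intro: always_eventually le_less_trans[OF SUP_upper])
  qed
  then show ?thesis
    using tendsto_unique[OF trivial_limit_at_bot_linorder] by metis
qed

lemma antimono_tendsto_at_top_iff:
  fixes f :: "'a::linorder \<Rightarrow> 'b::{complete_linorder,linorder_topology}"
  assumes "antimono f"
  shows "(\<exists>L. (f \<longlongrightarrow> L) at_top \<and> P L) \<longleftrightarrow> P (INF x. f x)"
proof -
  have "(f \<longlongrightarrow> (INF x. f x)) at_top"
  proof (rule order_tendstoI)
    fix a assume "a < (INF x. f x)"
    then show "\<forall>\<^sub>F x in at_top. a < f x"
      by (auto intro: always_eventually less_le_trans[OF _ INF_lower])
  next
    fix a assume "(INF x. f x) < a"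
    then obtain x0 where "f x0 < a" by (auto simp: INF_less_iff)
    then show "\<forall>\<^sub>F x in at_top. f x < a"
      unfolding eventually_at_top_linorder
      using assms by (auto intro!: exI[of _ x0] elim: le_less_trans[rotated] dest: antimonoD)
  qed
  then show ?thesis
    using tendsto_unique[OF trivial_limit_at_top_linorder] by metis
qed

lemma Limsup_ereal_less_infinity_iff:
  "Limsup F (\<lambda>x. ereal (h x)) < \<infinity> \<longleftrightarrow> (\<exists>K. \<forall>\<^sub>F x in F. h x \<le> K)"
proof
  assume "Limsup F (\<lambda>x. ereal (h x)) < \<infinity>"
  then obtain K where "Limsup F (\<lambda>x. ereal (h x)) < ereal K"
    using ereal_dense2 by blast
  then have "\<forall>\<^sub>F x in F. ereal (h x) < ereal K" by (rule Limsup_lessD)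
  then show "\<exists>K. \<forall>\<^sub>F x in F. h x \<le> K" by (auto intro!: exI[of _ K] elim!: eventually_mono)
next
  assume "\<exists>K. \<forall>\<^sub>F x in F. h x \<le> K"
  then obtain K where "\<forall>\<^sub>F x in F. ereal (h x) \<le> ereal K" by (auto elim!: eventually_mono)
  then have "Limsup F (\<lambda>x. ereal (h x)) \<le> ereal K" by (rule Limsup_bounded)
  then show "Limsup F (\<lambda>x. ereal (h x)) < \<infinity>" by (rule le_less_trans) simp
qed

section \<open>Right derivatives of concave functions\<close>

definition slope :: "(real \<Rightarrow> real) \<Rightarrow> real \<Rightarrow> real \<Rightarrow> real" where
  "slope f u v = (f v - f u) / (v - u)"

lemma concave_on_slope_le:
  assumes f: "concave_on I f" and I: "w \<in> I" "v \<in> I" and wuv: "w < u" "u < v"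
  shows "slope f u v \<le> slope f w v" and "slope f w v \<le> slope f w u"
proof -
  have "convex_on I (\<lambda>x. - f x)" using f by (simp add: concave_on_def)
  note le = convex_on_slope_le[OF this I wuv]
  show "slope f u v \<le> slope f w v" "slope f w v \<le> slope f w u"
    using le wuv unfolding slope_def by (auto simp: field_split_simps)
qed

lemma rderiv_concave_eq_SUP:
  assumes f: "concave_on {a..b} f" and u: "a \<le> u" "u < b"
  shows "rderiv f u = (SUP v\<in>{u<..b}. ereal (slope f u v))"
proof -
  let ?S = "SUP v\<in>{u<..b}. ereal (slope f u v)"
  have "((\<lambda>v. ereal (slope f u v)) \<longlongrightarrow> ?S) (at_right u)"
  proof (rule order_tendstoI)
    fix y assume "y < ?S"
    then obtain v0 where v0: "v0 \<in> {u<..b}" "y < ereal (slope f u v0)"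
      by (auto simp: less_SUP_iff)
    have "slope f u v0 \<le> slope f u v" if "u < v" "v < v0" for v
      using concave_on_slope_le(2)[OF f, of u v0 v] u v0 that by auto
    then show "\<forall>\<^sub>F v in at_right u. y < ereal (slope f u v)"
      unfolding eventually_at_right_field using v0
      by (intro exI[of _ v0]) (auto intro: less_le_trans)
  next
    fix y assume "?S < y"
    have "ereal (slope f u v) \<le> ?S" if "u < v" "v < b" for v
      using that by (intro SUP_upper) auto
    then show "\<forall>\<^sub>F v in at_right u. ereal (slope f u v) < y"
      unfolding eventually_at_right_field using u \<open>?S < y\<close>
      by (intro exI[of _ b]) (auto intro: le_less_trans)
  qed
  then show ?thesis
    unfolding rderiv_def slope_def[symmetric] by (intro tendsto_Lim) auto
qed

lemma rderiv_concave_le_slope: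
  assumes f: "concave_on {a..b} f" and "a \<le> w" "w < u" "u < b"
  shows "rderiv f u \<le> ereal (slope f w u)"
proof -
  have "rderiv f u = (SUP v\<in>{u<..b}. ereal (slope f u v))"
    using assms by (intro rderiv_concave_eq_SUP[OF f]) auto
  also have "\<dots> \<le> ereal (slope f w u)"
    using assms concave_on_slope_le[OF f, of w] by (intro SUP_least) force
  finally show ?thesis .
qed

lemma slope_le_rderiv_concave:
  assumes f: "concave_on {a..b} f" and "a \<le> u" "u < v" "v \<le> b"
  shows "ereal (slope f u v) \<le> rderiv f u"
proof -
  have "rderiv f u = (SUP v\<in>{u<..b}. ereal (slope f u v))"
    using assms by (intro rderiv_concave_eq_SUP[OF f]) auto
  then show ?thesis using assms by (auto intro: SUP_upper)
qed

lemma rderiv_concave_antimono: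
  assumes f: "concave_on {a..b} f" and "a \<le> u" "u \<le> u'" "u' < b"
  shows "rderiv f u' \<le> rderiv f u"
proof (cases "u = u'")
  case False
  then have "rderiv f u' \<le> ereal (slope f u u')"
    using assms by (intro rderiv_concave_le_slope[OF f]) auto
  also have "\<dots> \<le> rderiv f u"
    using assms False by (intro slope_le_rderiv_concave[OF f]) auto
  finally show ?thesis .
qed simp

lemma rderiv01_concave_at_1:
  assumes f: "concave_on {0..1} f"
  shows "rderiv01 f 1 = (INF u\<in>{0..<1}. rderiv f u)"
proof -
  let ?I = "INF u\<in>{0..<1}. rderiv f u"
  have "(rderiv f \<longlongrightarrow> ?I) (at_left 1)"
  proof (rule order_tendstoI)
    fix y assume "y < ?I"
    have "?I \<le> rderiv f v" if "0 < v" "v < 1" for v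
      using that by (intro INF_lower) auto
    then show "\<forall>\<^sub>F v in at_left 1. y < rderiv f v"
      unfolding eventually_at_left_field using \<open>y < ?I\<close>
      by (intro exI[of _ 0]) (auto intro: less_le_trans)
  next
    fix y assume "?I < y"
    then obtain u0 where u0: "u0 \<in> {0..<1}" "rderiv f u0 < y"
      by (auto simp: INF_less_iff)
    have "rderiv f v \<le> rderiv f u0" if "u0 < v" "v < 1" for v
      using u0 that by (intro rderiv_concave_antimono[OF f]) auto
    then show "\<forall>\<^sub>F v in at_left 1. rderiv f v < y"
      unfolding eventually_at_left_field using u0
      by (intro exI[of _ u0]) (auto intro: le_less_trans)
  qed
  then show ?thesis
    unfolding rderiv01_def by (simp add: tendsto_Lim)
qed

lemma rderiv01_concave_antimono:
  assumes f: "concave_on {0..1} f" and "0 \<le> u" "u \<le> u'" "u' \<le> 1"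
  shows "rderiv01 f u' \<le> rderiv01 f u"
proof (cases "u' = 1")
  case True
  show ?thesis
  proof (cases "u = 1")
    case False
    have "rderiv01 f u' = (INF v\<in>{0..<1}. rderiv f v)"
      using True by (simp add: rderiv01_concave_at_1[OF f])
    also have "\<dots> \<le> rderiv f u"
      using assms False by (intro INF_lower) auto
    finally show ?thesis
      using False by (simp add: rderiv01_def)
  qed (use True in simp)
next
  case False
  then show ?thesis
    using assms rderiv_concave_antimono[OF f, of u u'] by (simp add: rderiv01_def)
qed

lemma concave_le_linear_if_rderiv_le:
  assumes f: "concave_on {0..1} f"
    and rderiv: "\<And>w. 0 < w \<Longrightarrow> w < 1 \<Longrightarrow> rderiv f w \<le> ereal K"
    and small: "\<And>e. e > 0 \<Longrightarrow> \<forall>\<^sub>F w in at_right 0. f w \<le> e"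
    and u: "0 < u" "u < 1"
  shows "f u \<le> K * u"
proof (rule field_le_epsilon)
  fix e :: real assume "e > 0"
  have "((\<lambda>w. \<bar>K\<bar> * w) \<longlongrightarrow> 0) (at_right 0)"
    by (intro tendsto_eq_intros) auto
  then have "\<forall>\<^sub>F w in at_right 0. \<bar>K\<bar> * w < e/2"
    using \<open>e > 0\<close> by (intro order_tendstoD) auto
  moreover have "\<forall>\<^sub>F w in at_right 0. 0 < w \<and> w < u"
    unfolding eventually_at_right_field using u by auto
  moreover have "\<forall>\<^sub>F w in at_right 0. f w \<le> e/2"
    using small[of "e/2"] \<open>e > 0\<close> by simp
  ultimately have "\<forall>\<^sub>F w in at_right 0. \<bar>K\<bar> * w < e/2 \<and> (0 < w \<and> w < u) \<and> f w \<le> e/2"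
    by eventually_elim blast
  then obtain w where w: "0 < w" "w < u" "f w \<le> e/2" "\<bar>K\<bar> * w < e/2"
    using eventually_happens'[OF trivial_limit_at_right_real] by blast
  have "ereal (slope f w u) \<le> rderiv f w"
    using w u by (intro slope_le_rderiv_concave[OF f]) auto
  also have "\<dots> \<le> ereal K"
    using w u by (intro rderiv) auto
  finally have "f u - f w \<le> K * (u - w)"
    using w by (simp add: slope_def pos_divide_le_eq)
  moreover have "- K * w \<le> \<bar>K\<bar> * w" using w by (intro mult_right_mono) auto
  ultimately show "f u \<le> K * u + e"
    using w by (simp add: algebra_simps)
qed

lemma concave_le_linear_if_rderiv_ge:
  assumes f: "concave_on {0..1} f"
    and rderiv: "\<And>w. 0 < w \<Longrightarrow> w < 1 \<Longrightarrow> ereal (- K) \<le> rderiv f w"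
    and small: "\<And>e. e > 0 \<Longrightarrow> \<forall>\<^sub>F w in at_left 1. f w \<le> e"
    and u: "0 < u" "u < 1"
  shows "f u \<le> K * (1 - u)"
proof (rule field_le_epsilon)
  fix e :: real assume "e > 0"
  have "((\<lambda>w. \<bar>K\<bar> * (1 - w)) \<longlongrightarrow> 0) (at_left 1)"
    by (intro tendsto_eq_intros) auto
  then have "\<forall>\<^sub>F w in at_left 1. \<bar>K\<bar> * (1 - w) < e/2"
    using \<open>e > 0\<close> by (intro order_tendstoD) auto
  moreover have "\<forall>\<^sub>F w in at_left 1. u < w \<and> w < 1"
    unfolding eventually_at_left_field using u by auto
  moreover have "\<forall>\<^sub>F w in at_left 1. f w \<le> e/2"
    using small[of "e/2"] \<open>e > 0\<close> by simp
  ultimately have "\<forall>\<^sub>F w in at_left 1. \<bar>K\<bar> * (1 - w) < e/2 \<and> (u < w \<and> w < 1) \<and> f w \<le> e/2"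
    by eventually_elim blast
  then obtain w where w: "u < w" "w < 1" "f w \<le> e/2" "\<bar>K\<bar> * (1 - w) < e/2"
    using eventually_happens'[OF trivial_limit_at_left_real] by blast
  have "ereal (- K) \<le> rderiv f w"
    using w u by (intro rderiv) auto
  also have "\<dots> \<le> ereal (slope f u w)"
    using w u by (intro rderiv_concave_le_slope[OF f]) auto
  finally have "- K * (w - u) \<le> f w - f u"
    using w by (simp add: slope_def pos_le_divide_eq)
  moreover have "- K * (1 - w) \<le> \<bar>K\<bar> * (1 - w)" using w by (intro mult_right_mono) auto
  ultimately show "f u \<le> K * (1 - u) + e"
    using w by (simp add: algebra_simps)
qed

lemma rderiv_concave_at_0_le:
  assumes f: "concave_on {0..1} f" and "0 \<le> f 0"
    and le: "\<And>v. 0 < v \<Longrightarrow> v \<le> 1 \<Longrightarrow> f v \<le> K * v"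
  shows "rderiv f 0 \<le> ereal K"
  unfolding rderiv_concave_eq_SUP[OF f order.refl zero_less_one]
proof (rule SUP_least)
  fix v :: real assume "v \<in> {0<..1}"
  then show "ereal (slope f 0 v) \<le> ereal K"
    using le[of v] \<open>0 \<le> f 0\<close> by (simp add: slope_def pos_divide_le_eq)
qed

lemma rderiv01_concave_at_1_ge:
  assumes f: "concave_on {0..1} f" and "0 \<le> f 1"
    and le: "\<And>u. 0 \<le> u \<Longrightarrow> u < 1 \<Longrightarrow> f u \<le> K * (1 - u)"
  shows "ereal (- K) \<le> rderiv01 f 1"
  unfolding rderiv01_concave_at_1[OF f]
proof (rule INF_greatest)
  fix u :: real assume u: "u \<in> {0..<1}"
  then have "- K \<le> slope f u 1"
    using le[of u] \<open>0 \<le> f 1\<close> by (simp add: slope_def pos_le_divide_eq algebra_simps)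
  also have "ereal (slope f u 1) \<le> rderiv f u"
    using u by (intro slope_le_rderiv_concave[OF f]) auto
  finally show "ereal (- K) \<le> rderiv f u" by simp
qed


section \<open>Least concave majorants on [0, 1]\<close>

lemma concave_on_affine: "concave_on {0..1} (\<lambda>v::real. c + d * v)"
  unfolding concave_on_iff
  by (auto simp: convex_real_interval algebra_simps simp flip: distrib_right)

lemma lcm01_le_concave_majorant:
  assumes "concave_on {0..1} g" "\<And>v. v \<in> {0..1} \<Longrightarrow> J v \<le> g v" "u \<in> {0..1}"
  shows "lcm01 J u \<le> g u"
  unfolding lcm01_def using assms
  by (intro cInf_lower) (auto simp: bdd_below_def intro!: exI[of _ "J u"])

lemma lcm01_le_affine:
  assumes "\<And>v. v \<in> {0..1} \<Longrightarrow> J v \<le> c + d * v" "u \<in> {0..1}"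
  shows "lcm01 J u \<le> c + d * u"
  using lcm01_le_concave_majorant[OF concave_on_affine] assms by blast

lemma concave_majorant_exists:
  fixes J :: "real \<Rightarrow> real"
  assumes "bdd_above (J ` {0..1})"
  shows "\<exists>g. concave_on {0..1} g \<and> (\<forall>v\<in>{0..1}. J v \<le> g v)"
proof -
  obtain B where "\<forall>v\<in>{0..1}. J v \<le> B"
    using assms by (auto simp: bdd_above_def)
  then show ?thesis
    by (intro exI[of _ "\<lambda>_. B"]) (simp add: concave_on_const convex_real_interval)
qed

lemma le_lcm01:
  assumes "bdd_above (J ` {0..1})" "u \<in> {0..1}"
  shows "J u \<le> lcm01 J u"
  unfolding lcm01_def using concave_majorant_exists[OF assms(1)] assms(2)
  by (intro cInf_greatest) auto

lemma concave_on_lcm01: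
  assumes bdd: "bdd_above (J ` {0..1})"
  shows "concave_on {0..1} (lcm01 J)"
  unfolding concave_on_iff
proof (intro conjI ballI allI impI)
  fix x y a b :: real
  assume xy: "x \<in> {0..1}" "y \<in> {0..1}" and ab: "0 \<le> a" "0 \<le> b" "a + b = 1"
  let ?z = "a *\<^sub>R x + b *\<^sub>R y"
  show "a * lcm01 J x + b * lcm01 J y \<le> lcm01 J ?z"
    unfolding lcm01_def[of J ?z]
  proof (rule cInf_greatest)
    fix t assume "t \<in> {g ?z |g. concave_on {0..1} g \<and> (\<forall>v\<in>{0..1}. J v \<le> g v)}"
    then obtain g where g: "t = g ?z" "concave_on {0..1} g" "\<forall>v\<in>{0..1}. J v \<le> g v"
      by auto
    have "a * lcm01 J x + b * lcm01 J y \<le> a * g x + b * g y"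
      using lcm01_le_concave_majorant[OF g(2)] g(3) xy ab
      by (intro add_mono mult_left_mono) auto
    also have "\<dots> \<le> g ?z"
      using g(2) xy ab unfolding concave_on_iff by blast
    finally show "a * lcm01 J x + b * lcm01 J y \<le> t"
      using g(1) by simp
  qed (use concave_majorant_exists[OF bdd] in auto)
qed (simp add: convex_real_interval)

lemma le_linear_if_rderiv_lcm01_le:
  assumes bdd: "bdd_above (J ` {0..1})"
    and small: "\<And>e. e > 0 \<Longrightarrow> \<exists>c. \<forall>v\<in>{0..1}. J v \<le> e + c * v"
    and rderiv: "\<And>w. 0 < w \<Longrightarrow> w < 1 \<Longrightarrow> rderiv (lcm01 J) w \<le> ereal K"
    and u: "0 < u" "u < 1"
  shows "J u \<le> K * u"
proof -
  have "lcm01 J u \<le> K * u"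
  proof (rule concave_le_linear_if_rderiv_le[OF concave_on_lcm01[OF bdd] rderiv _ u])
    fix e :: real assume "e > 0"
    then obtain c where c: "\<forall>v\<in>{0..1}. J v \<le> e/2 + c * v"
      using small[of "e/2"] by auto
    have "((\<lambda>w. c * w) \<longlongrightarrow> 0) (at_right 0)"
      by (intro tendsto_eq_intros) auto
    then have "\<forall>\<^sub>F w in at_right 0. c * w < e/2"
      using \<open>e > 0\<close> by (intro order_tendstoD) auto
    moreover have "\<forall>\<^sub>F w in at_right (0::real). w \<in> {0..1}"
      unfolding eventually_at_right_field by (intro exI[of _ 1]) auto
    ultimately show "\<forall>\<^sub>F w in at_right 0. lcm01 J w \<le> e"
      by eventually_elim (use lcm01_le_affine[OF c[rule_format]] in fastforce)
  qed
  then show ?thesis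
    using le_lcm01[OF bdd, of u] u by simp
qed

lemma le_linear_if_rderiv_lcm01_ge:
  assumes bdd: "bdd_above (J ` {0..1})"
    and small: "\<And>e. e > 0 \<Longrightarrow> \<exists>c. \<forall>v\<in>{0..1}. J v \<le> e + c * (1 - v)"
    and rderiv: "\<And>w. 0 < w \<Longrightarrow> w < 1 \<Longrightarrow> ereal (- K) \<le> rderiv (lcm01 J) w"
    and u: "0 < u" "u < 1"
  shows "J u \<le> K * (1 - u)"
proof -
  have "lcm01 J u \<le> K * (1 - u)"
  proof (rule concave_le_linear_if_rderiv_ge[OF concave_on_lcm01[OF bdd] rderiv _ u])
    fix e :: real assume "e > 0"
    then obtain c where "\<forall>v\<in>{0..1}. J v \<le> e/2 + c * (1 - v)"
      using small[of "e/2"] by auto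
    then have c: "\<And>v. v \<in> {0..1} \<Longrightarrow> J v \<le> (e/2 + c) + (- c) * v"
      by (simp add: algebra_simps)
    have "((\<lambda>w. c * (1 - w)) \<longlongrightarrow> 0) (at_left 1)"
      by (intro tendsto_eq_intros) auto
    then have "\<forall>\<^sub>F w in at_left 1. c * (1 - w) < e/2"
      using \<open>e > 0\<close> by (intro order_tendstoD) auto
    moreover have "\<forall>\<^sub>F w in at_left (1::real). w \<in> {0..1}"
      unfolding eventually_at_left_field by (intro exI[of _ 0]) auto
    ultimately show "\<forall>\<^sub>F w in at_left 1. lcm01 J w \<le> e"
      by eventually_elim (use lcm01_le_affine[OF c] in \<open>fastforce simp: algebra_simps\<close>)
  qed
  then show ?thesis
    using le_lcm01[OF bdd, of u] u by simp
qed

lemma rderiv_lcm01_at_0_bounded: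
  assumes bdd: "bdd_above (J ` {0..1})" and "J 0 = 0"
    and le: "\<And>u. 0 < u \<Longrightarrow> u < 1 \<Longrightarrow> J u \<le> K * u"
  shows "\<exists>K'. rderiv (lcm01 J) 0 \<le> ereal K'"
proof -
  obtain B where B: "\<forall>v\<in>{0..1}. J v \<le> B"
    using bdd by (auto simp: bdd_above_def)
  define K' where "K' = max K B"
  have affine: "J v \<le> 0 + K' * v" if v: "v \<in> {0..1}" for v
  proof -
    consider "v = 0" | "0 < v" "v < 1" | "v = 1" using v by fastforce
    then show ?thesis
    proof cases
      case 2
      then have "K * v \<le> K' * v" by (intro mult_right_mono) (auto simp: K'_def)
      then show ?thesis using le[of v] 2 by linarith
    qed (use B[rule_format, of 1] \<open>J 0 = 0\<close> in \<open>auto simp: K'_def\<close>)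
  qed
  have "lcm01 J v \<le> K' * v" if "v \<in> {0..1}" for v
    using lcm01_le_affine[of J 0 K', OF affine that] by simp
  moreover have "0 \<le> lcm01 J 0"
    using le_lcm01[OF bdd, of 0] \<open>J 0 = 0\<close> by simp
  ultimately show ?thesis
    by (intro exI[of _ K'] rderiv_concave_at_0_le[OF concave_on_lcm01[OF bdd]]) auto
qed

lemma rderiv01_lcm01_at_1_bounded:
  assumes bdd: "bdd_above (J ` {0..1})" and "J 1 = 0"
    and le: "\<And>u. 0 < u \<Longrightarrow> u < 1 \<Longrightarrow> J u \<le> K * (1 - u)"
  shows "\<exists>K'. ereal (- K') \<le> rderiv01 (lcm01 J) 1"
proof -
  obtain B where B: "\<forall>v\<in>{0..1}. J v \<le> B"
    using bdd by (auto simp: bdd_above_def)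
  define K' where "K' = max K B"
  have affine: "J v \<le> K' + (- K') * v" if v: "v \<in> {0..1}" for v
  proof -
    consider "v = 0" | "0 < v" "v < 1" | "v = 1" using v by fastforce
    then show ?thesis
    proof cases
      case 2
      then have "K * (1 - v) \<le> K' * (1 - v)" by (intro mult_right_mono) (auto simp: K'_def)
      then show ?thesis using le[of v] 2 by (simp add: algebra_simps)
    qed (use B[rule_format, of 0] \<open>J 1 = 0\<close> in \<open>auto simp: K'_def\<close>)
  qed
  have "lcm01 J v \<le> K' * (1 - v)" if "v \<in> {0..1}" for v
    using lcm01_le_affine[of J K' "- K'", OF affine that] by (simp add: algebra_simps)
  moreover have "0 \<le> lcm01 J 1"
    using le_lcm01[OF bdd, of 1] \<open>J 1 = 0\<close> by simp
  ultimately show ?thesis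
    by (intro exI[of _ K'] rderiv01_concave_at_1_ge[OF concave_on_lcm01[OF bdd]]) auto
qed

section \<open>Uniformly continuous densities\<close>

lemma set_integral_const_Ioc:
  fixes a b c :: real
  assumes "a \<le> b"
  shows "set_integrable lborel {a<..b} (\<lambda>_. c)"
    and "(LINT x:{a<..b}|lborel. c) = c * (b - a)"
proof -
  have "integrable lborel (indicator {a<..b} :: real \<Rightarrow> real)"
    using assms by (intro integrable_real_indicator) (auto simp: emeasure_lborel_Ioc)
  then show "set_integrable lborel {a<..b} (\<lambda>_. c)"
    unfolding set_integrable_def by simp
  show "(LINT x:{a<..b}|lborel. c) = c * (b - a)"
    using assms by (subst set_integral_const) auto
qed

locale uc_density =
  fixes p :: "real \<Rightarrow> real"
  assumes nonneg: "\<And>z. p z \<ge> 0" and integrable: "integrable lborel p"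
    and total: "integral\<^sup>L lborel p = 1" and unif: "uniformly_continuous_on UNIV p"
begin

abbreviation "F \<equiv> cdf_of p"
abbreviation "J \<equiv> Jfun p"
abbreviation "psi \<equiv> psi_star p"

lemma isCont_p: "isCont p x"
  using uniformly_continuous_imp_continuous[OF unif] continuous_on_eq_continuous_at by blast

lemma set_integrable_p: "A \<in> sets lborel \<Longrightarrow> set_integrable lborel A p"
  unfolding set_integrable_def using integrable_mult_indicator[OF _ integrable] by simp

lemma cdf_diff: "a \<le> b \<Longrightarrow> F b - F a = (LINT x:{a<..b}|lborel. p x)"
proof -
  assume "a \<le> b"
  then have "{..b} = {..a} \<union> {a<..b}" by auto
  then have "F b = (LINT x:{..a} \<union> {a<..b}|lborel. p x)"
    unfolding cdf_of_def by simp
  also have "\<dots> = F a + (LINT x:{a<..b}|lborel. p x)"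
    unfolding cdf_of_def by (rule set_integral_Un) (auto simp: set_integrable_p)
  finally show ?thesis by simp
qed

lemma cdf_diff_ge:
  assumes "a \<le> b" "\<And>x. a < x \<Longrightarrow> x \<le> b \<Longrightarrow> c \<le> p x"
  shows "c * (b - a) \<le> F b - F a"
proof -
  have "c * (b - a) = (LINT x:{a<..b}|lborel. c)"
    using set_integral_const_Ioc(2)[OF assms(1)] by simp
  also have "\<dots> \<le> (LINT x:{a<..b}|lborel. p x)"
    using assms by (intro set_integral_mono set_integral_const_Ioc(1) set_integrable_p) auto
  finally show ?thesis using cdf_diff[OF assms(1)] by simp
qed

lemma cdf_diff_le:
  assumes "a \<le> b" "\<And>x. a < x \<Longrightarrow> x \<le> b \<Longrightarrow> p x \<le> c"
  shows "F b - F a \<le> c * (b - a)"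
proof -
  have "(LINT x:{a<..b}|lborel. p x) \<le> (LINT x:{a<..b}|lborel. c)"
    using assms by (intro set_integral_mono set_integral_const_Ioc(1) set_integrable_p) auto
  also have "\<dots> = c * (b - a)"
    using set_integral_const_Ioc(2)[OF assms(1)] by simp
  finally show ?thesis using cdf_diff[OF assms(1)] by simp
qed

lemma cdf_mono: "a \<le> b \<Longrightarrow> F a \<le> F b"
  using cdf_diff_ge[of a b 0] nonneg by force

lemma cdf_nonneg: "0 \<le> F x"
  unfolding cdf_of_def set_lebesgue_integral_def
  by (rule Bochner_Integration.integral_nonneg) (auto simp: nonneg)

lemma cdf_le_1: "F x \<le> 1"
proof -
  have "F x = (\<integral>y. indicator {..x} y * p y \<partial>lborel)"
    unfolding cdf_of_def set_lebesgue_integral_def by simp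
  also have "\<dots> \<le> (\<integral>y. p y \<partial>lborel)"
    using integrable_mult_indicator[OF _ integrable, of "{..x}"]
    by (intro integral_mono) (auto simp: nonneg integrable split: split_indicator)
  finally show ?thesis using total by simp
qed

lemma cdf_at_top: "(F \<longlongrightarrow> 1) at_top"
  using tendsto_integral_at_top[of lborel p] integrable total
  unfolding cdf_of_def set_lebesgue_integral_def by simp

lemma cdf_at_bot: "(F \<longlongrightarrow> 0) at_bot"
proof -
  have "((\<lambda>t. \<integral>x. indicator {..-t} x * p x \<partial>lborel) \<longlongrightarrow> integral\<^sup>L lborel (\<lambda>x::real. 0::real)) at_top"
  proof (rule integral_dominated_convergence_at_top[where w = p and M = lborel])
    show "AE x in lborel. ((\<lambda>t. indicator {..-t} x * p x) \<longlongrightarrow> 0) at_top"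
    proof (rule AE_I2)
      fix x
      have "\<forall>\<^sub>F t in at_top. indicator {..-t} x * p x = 0"
        using eventually_gt_at_top[of "-x"] by eventually_elim (auto simp: indicator_def)
      then show "((\<lambda>t. indicator {..-t} x * p x) \<longlongrightarrow> 0) at_top"
        by (rule tendsto_eventually)
    qed
    show "\<forall>\<^sub>F t in at_top. AE x in lborel. norm (indicator {..-t} x * p x) \<le> p x"
      by (auto simp: indicator_def nonneg)
  qed (use integrable in auto)
  then have "((\<lambda>t. F (-t)) \<longlongrightarrow> 0) at_top"
    unfolding cdf_of_def set_lebesgue_integral_def by simp
  then show ?thesis
    by (simp add: filterlim_at_bot_mirror)
qed

lemma p_le_local_average:
  assumes "e > 0"
  shows "\<exists>d>0. \<forall>x. p x \<le> e + (F x - F (x - d)) / d \<and> p x \<le> e + (F (x + d) - F x) / d"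
proof -
  obtain d where d: "d > 0" "\<And>x y. dist y x < d \<Longrightarrow> dist (p y) (p x) < e"
    using unif assms unfolding uniformly_continuous_on_def by blast
  have near: "p x - e \<le> p y" if "\<bar>y - x\<bar> \<le> d/2" for x y
    using d(2)[of y x] that d(1) by (auto simp: dist_real_def)
  show ?thesis
  proof (intro exI[of _ "d/2"] conjI allI)
    fix x
    have "(p x - e) * (x - (x - d/2)) \<le> F x - F (x - d/2)"
      by (rule cdf_diff_ge) (use d near in auto)
    then show "p x \<le> e + (F x - F (x - d/2)) / (d/2)"
      using d by (simp add: field_simps)
    have "(p x - e) * ((x + d/2) - x) \<le> F (x + d/2) - F x"
      by (rule cdf_diff_ge) (use d near in auto)
    then show "p x \<le> e + (F (x + d/2) - F x) / (d/2)"
      using d by (simp add: field_simps)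
  qed (use d in simp)
qed

lemma p_bounded: "\<exists>B. \<forall>x. p x \<le> B"
proof -
  obtain d where d: "d > 0" "\<And>x. p x \<le> 1 + (F (x + d) - F x) / d"
    using p_le_local_average[of 1] by auto
  have "(F (x + d) - F x) / d \<le> 1 / d" for x
    using d(1) cdf_le_1[of "x + d"] cdf_nonneg[of x] by (intro divide_right_mono) auto
  then show ?thesis using d(2) by (metis add_left_mono order_trans)
qed

lemma isCont_cdf: "isCont F x"
proof -
  obtain B where B: "\<And>x. p x \<le> B" using p_bounded by blast
  have "dist (F a) (F b) \<le> B * dist a b" for a b
  proof (cases "a \<le> b")
    case True
    then show ?thesis using cdf_diff_le[of a b B] cdf_mono[of a b] B by (simp add: dist_real_def)
  next
    case False
    then show ?thesis using cdf_diff_le[of b a B] cdf_mono[of b a] B by (simp add: dist_real_def)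
  qed
  moreover have "0 \<le> B" using B[of 0] nonneg[of 0] by linarith
  ultimately have "B-lipschitz_on UNIV F" by (simp add: lipschitz_on_def)
  then show ?thesis
    using lipschitz_on_continuous_on continuous_on_eq_continuous_at by blast
qed

lemma cdf_strict_mono_at_support:
  assumes "a < b" "a \<le> c" "c \<le> b" "0 < p c"
  shows "F a < F b"
proof -
  obtain h where h: "h > 0" "\<And>y. dist y c < h \<Longrightarrow> dist (p y) (p c) < p c / 2"
    using unif assms(4) unfolding uniformly_continuous_on_def by (meson UNIV_I half_gt_zero)
  define lo where "lo = max a (c - h/2)"
  define hi where "hi = min b (c + h/2)"
  have "lo < hi" using assms h by (auto simp: lo_def hi_def)
  have "p c / 2 * (hi - lo) \<le> F hi - F lo"
  proof (rule cdf_diff_ge)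
    fix x assume "lo < x" "x \<le> hi"
    then have "dist x c < h" using h by (auto simp: lo_def hi_def dist_real_def)
    then have "\<bar>p x - p c\<bar> < p c / 2" using h(2)[of x] by (simp add: dist_real_def)
    then show "p c / 2 \<le> p x" by arith
  qed (use \<open>lo < hi\<close> in simp)
  moreover have "0 < p c / 2 * (hi - lo)" using \<open>lo < hi\<close> assms(4) by simp
  moreover have "F a \<le> F lo" "F hi \<le> F b" by (auto intro: cdf_mono simp: lo_def hi_def)
  ultimately show ?thesis by linarith
qed

lemma quantile_finite:
  assumes u: "0 < u" and "u \<le> F z0"
  obtains q where "quantile p u = ereal q" "u \<le> F q" "\<And>z. z < q \<Longrightarrow> F z < u"
proof -
  define A where "A = {z. u \<le> F z}"
  have "\<forall>\<^sub>F z in at_bot. F z < u"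
    using cdf_at_bot u by (rule order_tendstoD)
  then obtain N where N: "\<And>z. z \<le> N \<Longrightarrow> F z < u"
    unfolding eventually_at_bot_linorder by blast
  have "N \<le> z" if "z \<in> A" for z
    using N[of z] that by (force simp: A_def)
  then have bdd: "bdd_below A" by (rule bdd_belowI)
  have "continuous_on UNIV F"
    using isCont_cdf by (simp add: continuous_at_imp_continuous_on)
  then have "closed A"
    unfolding A_def by (intro closed_Collect_le continuous_on_const)
  then have "Inf A \<in> A"
    using closed_contains_Inf[OF _ bdd] assms(2) by (auto simp: A_def)
  have below: "F z < u" if "z < Inf A" for z
    using cInf_lower[OF _ bdd, of z] that by (force simp: A_def)
  have "quantile p u = ereal (Inf A)"
    unfolding quantile_def
  proof (rule Inf_eqI)
    fix i assume "i \<in> {z. u \<le> cdf_ext p z}"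
    then show "ereal (Inf A) \<le> i"
      using u cInf_lower[OF _ bdd] by (cases i) (auto simp: cdf_ext_def A_def)
  next
    fix y assume "\<And>i. i \<in> {z. u \<le> cdf_ext p z} \<Longrightarrow> y \<le> i"
    moreover have "ereal (Inf A) \<in> {z. u \<le> cdf_ext p z}"
      using \<open>Inf A \<in> A\<close> by (simp add: A_def cdf_ext_def)
    ultimately show "y \<le> ereal (Inf A)" by blast
  qed
  then show ?thesis
    using that \<open>Inf A \<in> A\<close> below by (simp add: A_def)
qed

lemma quantile_infinite:
  assumes "\<forall>z. F z < u" "u \<le> 1"
  shows "quantile p u = \<infinity>"
proof -
  have "0 < u" using assms(1)[rule_format, of 0] cdf_nonneg[of 0] by linarith
  have "{z::ereal. u \<le> cdf_ext p z} = {\<infinity>}"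
  proof (intro set_eqI iffI)
    fix z assume "z \<in> {z::ereal. u \<le> cdf_ext p z}"
    then have z: "u \<le> cdf_ext p z" by simp
    show "z \<in> {\<infinity>}"
    proof (cases z)
      case (real r)
      then show ?thesis using z assms(1)[rule_format, of r] by (simp add: cdf_ext_def)
    next
      case MInf
      then show ?thesis using z \<open>0 < u\<close> by (simp add: cdf_ext_def)
    qed simp
  qed (use assms(2) in \<open>auto simp: cdf_ext_def\<close>)
  then show ?thesis unfolding quantile_def by simp
qed

lemma quantile_interior:
  assumes "0 < u" "u < 1"
  obtains q where "quantile p u = ereal q" "F q = u" "\<And>z. z < q \<Longrightarrow> F z < u"
proof -
  have "\<forall>\<^sub>F z in at_top. u < F z"
    using cdf_at_top assms(2) by (rule order_tendstoD)
  then obtain z0 where "u \<le> F z0"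
    unfolding eventually_at_top_linorder by (meson less_imp_le order.refl)
  then obtain q where q: "quantile p u = ereal q" "u \<le> F q" "\<And>z. z < q \<Longrightarrow> F z < u"
    using quantile_finite assms(1) by blast
  have "(F \<longlongrightarrow> F q) (at_left q)"
    using isCont_cdf[of q] unfolding isCont_def by (rule tendsto_mono[OF at_le, rotated]) simp
  moreover have "\<forall>\<^sub>F z in at_left q. F z \<le> u"
    unfolding eventually_at_left_field by (intro exI[of _ "q - 1"]) (auto intro!: less_imp_le[OF q(3)])
  ultimately have "F q \<le> u" by (rule tendsto_upperbound) simp
  then show ?thesis using that q by simp
qed

lemma cdf_surj: "0 < u \<Longrightarrow> u < 1 \<Longrightarrow> \<exists>z. F z = u"
  by (metis quantile_interior)

lemma Jfun_0: "J 0 = 0"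
proof -
  have "quantile p 0 \<le> -\<infinity>"
    unfolding quantile_def by (rule Inf_lower) (simp add: cdf_ext_def)
  then show ?thesis by (simp add: Jfun_def dens_ext_def)
qed

lemma Jfun_1: "J 1 = 0"
proof (cases "\<exists>z0. 1 \<le> F z0")
  case True
  then obtain z0 where "1 \<le> F z0" by blast
  then obtain q where q: "quantile p 1 = ereal q" "1 \<le> F q"
    using quantile_finite[OF zero_less_one] by blast
  have "\<not> 0 < p q"
    using cdf_strict_mono_at_support[of q "q + 1" q] q(2) cdf_le_1[of "q + 1"] by auto
  then show ?thesis using q nonneg[of q] by (simp add: Jfun_def dens_ext_def)
next
  case False
  then show ?thesis by (simp add: quantile_infinite not_le Jfun_def dens_ext_def)
qed

text \<open>The quantile of F z may lie left of z, but only across a flat stretch of F,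
  on which p vanishes.\<close>
lemma Jfun_cdf:
  assumes "0 < F z" "F z < 1"
  shows "J (F z) = p z"
proof -
  obtain q where q: "quantile p (F z) = ereal q" "F q = F z" "\<And>y. y < q \<Longrightarrow> F y < F z"
    using quantile_interior[OF assms] by blast
  then have "q \<le> z" by force
  have "p q = p z"
  proof (cases "q = z")
    case False
    then have "q < z" using \<open>q \<le> z\<close> by simp
    then have "\<not> 0 < p z" "\<not> 0 < p q"
      using cdf_strict_mono_at_support[of q z z] cdf_strict_mono_at_support[of q z q] q(2)
      by auto
    then show ?thesis using nonneg[of q] nonneg[of z] by simp
  qed simp
  then show ?thesis using q by (simp add: Jfun_def dens_ext_def)
qed

lemma Jfun_cases:
  assumes "u \<in> {0..1}"
  obtains "J u = 0" | z where "F z = u" "J u = p z"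
  using assms Jfun_0 Jfun_1 cdf_surj Jfun_cdf
  by (metis atLeastAtMost_iff order_less_le)

lemma bdd_above_Jfun: "bdd_above (J ` {0..1})"
proof -
  obtain B where "\<And>x. p x \<le> B" using p_bounded by blast
  then have "J u \<le> max B 0" for u
    by (simp add: Jfun_def dens_ext_def le_max_iff_disj)
  then show ?thesis by (meson bdd_aboveI2)
qed

lemma Jfun_small_at_0: "e > 0 \<Longrightarrow> \<exists>c. \<forall>u\<in>{0..1}. J u \<le> e + c * u"
proof -
  assume "e > 0"
  then obtain d where d: "d > 0" "\<And>x. p x \<le> e + (F x - F (x - d)) / d"
    using p_le_local_average by blast
  have "J u \<le> e + (1/d) * u" if "u \<in> {0..1}" for u
    using that
  proof (cases rule: Jfun_cases)
    case (2 z)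
    have "(F z - F (z - d)) / d \<le> F z / d"
      using d(1) cdf_nonneg[of "z - d"] by (intro divide_right_mono) auto
    then show ?thesis using d(2)[of z] 2 by simp
  qed (use that \<open>e > 0\<close> d(1) in auto)
  then show ?thesis by blast
qed

lemma Jfun_small_at_1: "e > 0 \<Longrightarrow> \<exists>c. \<forall>u\<in>{0..1}. J u \<le> e + c * (1 - u)"
proof -
  assume "e > 0"
  then obtain d where d: "d > 0" "\<And>x. p x \<le> e + (F (x + d) - F x) / d"
    using p_le_local_average by blast
  have "J u \<le> e + (1/d) * (1 - u)" if "u \<in> {0..1}" for u
    using that
  proof (cases rule: Jfun_cases)
    case (2 z)
    have "(F (z + d) - F z) / d \<le> (1 - F z) / d"
      using d(1) cdf_le_1[of "z + d"] by (intro divide_right_mono) auto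
    then show ?thesis using d(2)[of z] 2 by simp
  qed (use that \<open>e > 0\<close> d(1) in auto)
  then show ?thesis by blast
qed

lemma concave_on_lcm01_Jfun: "concave_on {0..1} (lcm01 J)"
  by (rule concave_on_lcm01[OF bdd_above_Jfun])

lemma psi_antimono: "antimono psi"
  unfolding psi_star_def
  by (intro antimonoI rderiv01_concave_antimono[OF concave_on_lcm01_Jfun])
    (auto simp: cdf_nonneg cdf_le_1 cdf_mono)

lemma psi_eq_rderiv: "F z < 1 \<Longrightarrow> psi z = rderiv (lcm01 J) (F z)"
  unfolding psi_star_def rderiv01_def by simp

lemma psi_le_rderiv_0: "psi z \<le> rderiv (lcm01 J) 0"
  using rderiv01_concave_antimono[OF concave_on_lcm01_Jfun, of 0 "F z"]
  by (simp add: psi_star_def rderiv01_def cdf_nonneg cdf_le_1)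

lemma rderiv01_1_le_psi: "rderiv01 (lcm01 J) 1 \<le> psi z"
  using rderiv01_concave_antimono[OF concave_on_lcm01_Jfun, of "F z" 1]
  by (simp add: psi_star_def cdf_nonneg cdf_le_1)

lemma psi_bounded_above_iff:
  "(SUP z. psi z) < \<infinity> \<longleftrightarrow> (\<exists>K. \<forall>u\<in>{0<..<1}. J u \<le> K * u)"
proof
  assume "(SUP z. psi z) < \<infinity>"
  then obtain K where K: "(SUP z. psi z) < ereal K"
    using ereal_dense2 by blast
  have "rderiv (lcm01 J) u \<le> ereal K" if u: "0 < u" "u < 1" for u
  proof -
    obtain z where "F z = u" using cdf_surj u by blast
    then have "rderiv (lcm01 J) u = psi z" using psi_eq_rderiv u by simp
    also have "\<dots> \<le> ereal K" using K by (meson SUP_upper UNIV_I less_imp_le order_trans)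
    finally show ?thesis .
  qed
  then show "\<exists>K. \<forall>u\<in>{0<..<1}. J u \<le> K * u"
    by (auto intro!: exI[of _ K] le_linear_if_rderiv_lcm01_le[OF bdd_above_Jfun Jfun_small_at_0])
next
  assume "\<exists>K. \<forall>u\<in>{0<..<1}. J u \<le> K * u"
  then obtain K where "rderiv (lcm01 J) 0 \<le> ereal K"
    using rderiv_lcm01_at_0_bounded[OF bdd_above_Jfun Jfun_0] by force
  then have "(SUP z. psi z) \<le> ereal K"
    using psi_le_rderiv_0 by (blast intro: SUP_least order_trans)
  then show "(SUP z. psi z) < \<infinity>" by (rule le_less_trans) simp
qed

lemma psi_bounded_below_iff:
  "(INF z. psi z) > -\<infinity> \<longleftrightarrow> (\<exists>K. \<forall>u\<in>{0<..<1}. J u \<le> K * (1 - u))"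
proof
  assume "(INF z. psi z) > -\<infinity>"
  then obtain K where K: "ereal (- K) < (INF z. psi z)"
    using ereal_dense2 by (metis ereal_uminus_uminus uminus_ereal.simps(1))
  have "ereal (- K) \<le> rderiv (lcm01 J) u" if u: "0 < u" "u < 1" for u
  proof -
    obtain z where "F z = u" using cdf_surj u by blast
    then have "rderiv (lcm01 J) u = psi z" using psi_eq_rderiv u by simp
    moreover have "ereal (- K) \<le> psi z" using K by (meson INF_lower UNIV_I less_imp_le order_trans)
    ultimately show ?thesis by simp
  qed
  then show "\<exists>K. \<forall>u\<in>{0<..<1}. J u \<le> K * (1 - u)"
    by (auto intro!: exI[of _ K] le_linear_if_rderiv_lcm01_ge[OF bdd_above_Jfun Jfun_small_at_1])
next
  assume "\<exists>K. \<forall>u\<in>{0<..<1}. J u \<le> K * (1 - u)"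
  then obtain K where "ereal (- K) \<le> rderiv01 (lcm01 J) 1"
    using rderiv01_lcm01_at_1_bounded[OF bdd_above_Jfun Jfun_1] by force
  then have "ereal (- K) \<le> (INF z. psi z)"
    using rderiv01_1_le_psi by (blast intro: INF_greatest order_trans)
  then show "(INF z. psi z) > -\<infinity>" by (rule less_le_trans[rotated]) simp
qed

section \<open>Support endpoints and the two-sided hazard\<close>

lemma p_positive_somewhere: "\<exists>z. 0 < p z"
proof (rule ccontr)
  assume "\<nexists>z. 0 < p z"
  then have "p = (\<lambda>_. 0)" using nonneg by (intro ext) (meson linorder_not_le order.antisym)
  then show False using total by simp
qed

lemma zmin_neq_infinity: "zmin p \<noteq> \<infinity>"
proof -
  obtain z where "0 < p z" using p_positive_somewhere by blast
  then have "zmin p \<le> ereal z" unfolding zmin_def by (intro Inf_lower) auto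
  then show ?thesis by auto
qed

lemma zmax_neq_minfinity: "zmax p \<noteq> -\<infinity>"
proof -
  obtain z where "0 < p z" using p_positive_somewhere by blast
  then have "ereal z \<le> zmax p" unfolding zmax_def by (intro Sup_upper) auto
  then show ?thesis by auto
qed

lemma cdf_pos_above_zmin: "zmin p < ereal z \<Longrightarrow> 0 < F z"
proof -
  assume "zmin p < ereal z"
  then obtain y where "0 < p y" "y < z" unfolding zmin_def by (auto simp: Inf_less_iff)
  then have "F (y - 1) < F z" by (intro cdf_strict_mono_at_support[of _ _ y]) auto
  then show ?thesis using cdf_nonneg[of "y - 1"] by simp
qed

lemma cdf_less_1_below_zmax: "ereal z < zmax p \<Longrightarrow> F z < 1"
proof -
  assume "ereal z < zmax p"
  then obtain y where "0 < p y" "z < y" unfolding zmax_def by (auto simp: less_Sup_iff)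
  then have "F z < F (y + 1)" by (intro cdf_strict_mono_at_support[of _ _ y]) auto
  then show ?thesis using cdf_le_1[of "y + 1"] by simp
qed

lemma p_eq_0_below_zmin:
  assumes a: "zmin p = ereal a" and "z \<le> a"
  shows "p z = 0"
proof -
  have left: "p y = 0" if "y < a" for y
  proof (rule ccontr)
    assume "p y \<noteq> 0"
    then have "zmin p \<le> ereal y" unfolding zmin_def using nonneg[of y] by (intro Inf_lower) auto
    then show False using a that by simp
  qed
  have "(p \<longlongrightarrow> p a) (at_left a)"
    using isCont_p[of a] unfolding isCont_def by (rule tendsto_mono[OF at_le, rotated]) simp
  moreover have "\<forall>\<^sub>F y in at_left a. p y \<le> 0"
    unfolding eventually_at_left_field using left by (intro exI[of _ "a - 1"]) auto
  ultimately have "p a \<le> 0" by (rule tendsto_upperbound) simp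
  then show ?thesis using left nonneg[of a] \<open>z \<le> a\<close> by (cases "z = a") auto
qed

lemma p_eq_0_above_zmax:
  assumes b: "zmax p = ereal b" and "b \<le> z"
  shows "p z = 0"
proof -
  have right: "p y = 0" if "b < y" for y
  proof (rule ccontr)
    assume "p y \<noteq> 0"
    then have "ereal y \<le> zmax p" unfolding zmax_def using nonneg[of y] by (intro Sup_upper) auto
    then show False using b that by simp
  qed
  have "(p \<longlongrightarrow> p b) (at_right b)"
    using isCont_p[of b] unfolding isCont_def by (rule tendsto_mono[OF at_le, rotated]) simp
  moreover have "\<forall>\<^sub>F y in at_right b. p y \<le> 0"
    unfolding eventually_at_right_field using right by (intro exI[of _ "b + 1"]) auto
  ultimately have "p b \<le> 0" by (rule tendsto_upperbound) simp
  then show ?thesis using right nonneg[of b] \<open>b \<le> z\<close> by (cases "z = b") auto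
qed

lemma cdf_zmin: "zmin p = ereal a \<Longrightarrow> F a = 0"
proof -
  assume a: "zmin p = ereal a"
  have "F a = (LINT x:{..a}|lborel. (0::real))" unfolding cdf_of_def
    by (rule set_lebesgue_integral_cong) (auto simp: p_eq_0_below_zmin[OF a])
  then show ?thesis by simp
qed

lemma cdf_zmax: "zmax p = ereal b \<Longrightarrow> F b = 1"
proof -
  assume b: "zmax p = ereal b"
  have "F y \<le> F b" if "b \<le> y" for y
    using cdf_diff_le[OF that, of 0] p_eq_0_above_zmax[OF b] by auto
  then have "\<forall>\<^sub>F y in at_top. F y \<le> F b" by (auto simp: eventually_at_top_linorder)
  then have "1 \<le> F b" using cdf_at_top by (intro tendsto_upperbound) auto
  then show ?thesis using cdf_le_1[of b] by simp
qed

lemma eventually_cdf_lower_half: "\<forall>\<^sub>F z in from_above (zmin p). 0 < F z \<and> F z < 1/2"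
proof (cases "zmin p")
  case (real a)
  have "(F \<longlongrightarrow> F a) (at_right a)"
    using isCont_cdf[of a] unfolding isCont_def by (rule tendsto_mono[OF at_le, rotated]) simp
  then have "\<forall>\<^sub>F z in at_right a. F z < 1/2" using cdf_zmin[OF real] by (intro order_tendstoD(2)) auto
  moreover have "\<forall>\<^sub>F z in at_right a. 0 < F z"
    unfolding eventually_at_right_field using cdf_pos_above_zmin real by (intro exI[of _ "a + 1"]) auto
  ultimately show ?thesis using real unfolding from_above_def by (auto elim: eventually_elim2)
next
  case MInf
  have "\<forall>\<^sub>F z in at_bot. F z < 1/2" using cdf_at_bot by (intro order_tendstoD(2)) auto
  then show ?thesis using MInf cdf_pos_above_zmin unfolding from_above_def by (auto elim: eventually_mono)
qed (use zmin_neq_infinity in simp)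

lemma eventually_cdf_upper_half: "\<forall>\<^sub>F z in from_below (zmax p). 1/2 < F z \<and> F z < 1"
proof (cases "zmax p")
  case (real b)
  have "(F \<longlongrightarrow> F b) (at_left b)"
    using isCont_cdf[of b] unfolding isCont_def by (rule tendsto_mono[OF at_le, rotated]) simp
  then have "\<forall>\<^sub>F z in at_left b. 1/2 < F z" using cdf_zmax[OF real] by (intro order_tendstoD(1)) auto
  moreover have "\<forall>\<^sub>F z in at_left b. F z < 1"
    unfolding eventually_at_left_field using cdf_less_1_below_zmax real by (intro exI[of _ "b - 1"]) auto
  ultimately show ?thesis using real unfolding from_below_def by (auto elim: eventually_elim2)
next
  case PInf
  have "\<forall>\<^sub>F z in at_top. 1/2 < F z" using cdf_at_top by (intro order_tendstoD(1)) auto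
  then show ?thesis using PInf cdf_less_1_below_zmax unfolding from_below_def by (auto elim: eventually_mono)
qed (use zmax_neq_minfinity in simp)

lemma hazard2_le_iff_lower: "0 < F z \<Longrightarrow> F z < 1/2 \<Longrightarrow> hazard2 p z \<le> K \<longleftrightarrow> p z \<le> K * F z"
  unfolding hazard2_def by (simp add: min_def pos_divide_le_eq)

lemma hazard2_le_iff_upper: "1/2 < F z \<Longrightarrow> F z < 1 \<Longrightarrow> hazard2 p z \<le> K \<longleftrightarrow> p z \<le> K * (1 - F z)"
  unfolding hazard2_def by (simp add: min_def pos_divide_le_eq)

text \<open>A Gronwall argument: on [a, a + e] with K e \<le> 1/2, the maximum m of p satisfies
  m \<le> K F(a + e) \<le> K e m \<le> m/2.\<close>
lemma p_vanishes_right_of_cdf_0: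
  assumes "F a = 0" "a < d" and le: "\<And>z. a \<le> z \<Longrightarrow> z < d \<Longrightarrow> p z \<le> K * F z"
  obtains e where "e > 0" "\<And>y. a \<le> y \<Longrightarrow> y \<le> a + e \<Longrightarrow> p y = 0"
proof -
  define K1 where "K1 = max K 1"
  define e where "e = min ((d - a)/2) (1 / (2 * K1))"
  have e: "e > 0" "a + e < d" "K1 * e \<le> 1/2"
    using assms(2) by (auto simp: e_def K1_def min_def field_simps)
  obtain t where t: "a \<le> t" "t \<le> a + e" "\<And>y. a \<le> y \<Longrightarrow> y \<le> a + e \<Longrightarrow> p y \<le> p t"
    using continuous_attains_sup[of "{a..a+e}" p] isCont_p e(1)
    by (auto simp: continuous_at_imp_continuous_on)
  have "F (a + e) \<le> p t * e"
    using cdf_diff_le[of a "a + e" "p t"] t e(1) assms(1) by simp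
  have "K * F t \<le> K1 * F t"
    using cdf_nonneg[of t] by (intro mult_right_mono) (auto simp: K1_def)
  then have "p t \<le> K1 * F t"
    using le[of t] t e by linarith
  also have "\<dots> \<le> K1 * (p t * e)"
    using t cdf_mono[of t "a + e"] \<open>F (a + e) \<le> p t * e\<close>
    by (intro mult_left_mono) (auto simp: K1_def)
  also have "\<dots> \<le> p t / 2"
    using e(3) nonneg[of t] mult_left_mono[of "K1 * e" "1/2" "p t"] by (simp add: algebra_simps)
  finally have "p t \<le> 0" by simp
  then have "p y = 0" if "a \<le> y" "y \<le> a + e" for y
    using t(3)[OF that] nonneg[of y] by linarith
  with e(1) show ?thesis by (rule that)
qed

lemma p_vanishes_left_of_cdf_1:
  assumes "F b = 1" "d < b" and le: "\<And>z. d < z \<Longrightarrow> z \<le> b \<Longrightarrow> p z \<le> K * (1 - F z)"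
  obtains e where "e > 0" "\<And>y. b - e \<le> y \<Longrightarrow> y \<le> b \<Longrightarrow> p y = 0"
proof -
  define K1 where "K1 = max K 1"
  define e where "e = min ((b - d)/2) (1 / (2 * K1))"
  have e: "e > 0" "d < b - e" "K1 * e \<le> 1/2"
    using assms(2) by (auto simp: e_def K1_def min_def field_simps)
  obtain t where t: "b - e \<le> t" "t \<le> b" "\<And>y. b - e \<le> y \<Longrightarrow> y \<le> b \<Longrightarrow> p y \<le> p t"
    using continuous_attains_sup[of "{b-e..b}" p] isCont_p e(1)
    by (auto simp: continuous_at_imp_continuous_on)
  have "1 - F (b - e) \<le> p t * e"
    using cdf_diff_le[of "b - e" b "p t"] t e(1) assms(1) by simp
  have "K * (1 - F t) \<le> K1 * (1 - F t)"
    using cdf_le_1[of t] by (intro mult_right_mono) (auto simp: K1_def)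
  then have "p t \<le> K1 * (1 - F t)"
    using le[of t] t e by linarith
  also have "\<dots> \<le> K1 * (p t * e)"
    using t cdf_mono[of "b - e" t] \<open>1 - F (b - e) \<le> p t * e\<close>
    by (intro mult_left_mono) (auto simp: K1_def)
  also have "\<dots> \<le> p t / 2"
    using e(3) nonneg[of t] mult_left_mono[of "K1 * e" "1/2" "p t"] by (simp add: algebra_simps)
  finally have "p t \<le> 0" by simp
  then have "p y = 0" if "b - e \<le> y" "y \<le> b" for y
    using t(3)[OF that] nonneg[of y] by linarith
  with e(1) show ?thesis by (rule that)
qed

lemma zmin_eq_minfinity_if_hazard_bounded:
  assumes "\<forall>\<^sub>F z in from_above (zmin p). hazard2 p z \<le> K"
  shows "zmin p = -\<infinity>"
proof (rule ccontr)
  assume "zmin p \<noteq> -\<infinity>"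
  then obtain a where a: "zmin p = ereal a" using zmin_neq_infinity by (cases "zmin p") auto
  have "\<forall>\<^sub>F z in at_right a. p z \<le> K * F z"
    using eventually_conj[OF assms eventually_cdf_lower_half] a
    unfolding from_above_def by (auto elim!: eventually_mono simp: hazard2_le_iff_lower)
  then obtain d where "a < d" and d: "\<And>z. a < z \<Longrightarrow> z < d \<Longrightarrow> p z \<le> K * F z"
    unfolding eventually_at_right_field by blast
  have "p z \<le> K * F z" if "a \<le> z" "z < d" for z
    using d[of z] that p_eq_0_below_zmin[OF a] cdf_zmin[OF a] by (cases "z = a") auto
  then obtain e where "e > 0" and zero: "\<And>y. a \<le> y \<Longrightarrow> y \<le> a + e \<Longrightarrow> p y = 0"
    using p_vanishes_right_of_cdf_0[OF cdf_zmin[OF a] \<open>a < d\<close>] by blast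
  have "zmin p < ereal (a + e)" using a \<open>e > 0\<close> by simp
  then obtain y where "0 < p y" "y < a + e" unfolding zmin_def by (auto simp: Inf_less_iff)
  moreover have "zmin p \<le> ereal y" using \<open>0 < p y\<close> unfolding zmin_def by (intro Inf_lower) auto
  ultimately show False using zero[of y] a by simp
qed

lemma zmax_eq_infinity_if_hazard_bounded:
  assumes "\<forall>\<^sub>F z in from_below (zmax p). hazard2 p z \<le> K"
  shows "zmax p = \<infinity>"
proof (rule ccontr)
  assume "zmax p \<noteq> \<infinity>"
  then obtain b where b: "zmax p = ereal b" using zmax_neq_minfinity by (cases "zmax p") auto
  have "\<forall>\<^sub>F z in at_left b. p z \<le> K * (1 - F z)"
    using eventually_conj[OF assms eventually_cdf_upper_half] b
    unfolding from_below_def by (auto elim!: eventually_mono simp: hazard2_le_iff_upper)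
  then obtain d where "d < b" and d: "\<And>z. d < z \<Longrightarrow> z < b \<Longrightarrow> p z \<le> K * (1 - F z)"
    unfolding eventually_at_left_field by blast
  have "p z \<le> K * (1 - F z)" if "d < z" "z \<le> b" for z
    using d[of z] that p_eq_0_above_zmax[OF b] cdf_zmax[OF b] by (cases "z = b") auto
  then obtain e where "e > 0" and zero: "\<And>y. b - e \<le> y \<Longrightarrow> y \<le> b \<Longrightarrow> p y = 0"
    using p_vanishes_left_of_cdf_1[OF cdf_zmax[OF b] \<open>d < b\<close>] by blast
  have "ereal (b - e) < zmax p" using b \<open>e > 0\<close> by simp
  then obtain y where "0 < p y" "b - e < y" unfolding zmax_def by (auto simp: less_Sup_iff)
  moreover have "ereal y \<le> zmax p" using \<open>0 < p y\<close> unfolding zmax_def by (intro Sup_upper) auto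
  ultimately show False using zero[of y] b by simp
qed

lemma hazard_bounded_at_zmin_iff:
  "(\<exists>K. \<forall>\<^sub>F z in from_above (zmin p). hazard2 p z \<le> K) \<longleftrightarrow> (\<exists>K. \<forall>u\<in>{0<..<1}. J u \<le> K * u)"
proof
  assume "\<exists>K. \<forall>\<^sub>F z in from_above (zmin p). hazard2 p z \<le> K"
  then obtain K where K: "\<forall>\<^sub>F z in from_above (zmin p). hazard2 p z \<le> K" by blast
  then have "zmin p = -\<infinity>" by (rule zmin_eq_minfinity_if_hazard_bounded)
  then have "from_above (zmin p) = at_bot" by (simp add: from_above_def)
  then have "\<forall>\<^sub>F z in at_bot. p z \<le> K * F z \<and> 0 < F z"
    using eventually_conj[OF K eventually_cdf_lower_half]
    by (auto elim!: eventually_mono simp: hazard2_le_iff_lower)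
  then obtain N where N: "\<And>z. z \<le> N \<Longrightarrow> p z \<le> K * F z" and "0 < F N"
    unfolding eventually_at_bot_linorder by blast
  obtain B where B: "\<And>x. p x \<le> B" using p_bounded by blast
  define K' where "K' = max K (B / F N)"
  have "J u \<le> K' * u" if u: "0 < u" "u < 1" for u
  proof -
    obtain z where z: "F z = u" using cdf_surj u by blast
    then have "J u = p z" using Jfun_cdf u by auto
    also have "\<dots> \<le> K' * u"
    proof (cases "z \<le> N")
      case True
      then have "p z \<le> K * u" using N[OF True] z by simp
      also have "\<dots> \<le> K' * u" using u by (intro mult_right_mono) (auto simp: K'_def)
      finally show ?thesis .
    next
      case False
      then have "F N \<le> u" using cdf_mono[of N z] z by simp
      have "p z \<le> B / F N * F N" using B \<open>0 < F N\<close> by simp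
      also have "\<dots> \<le> B / F N * u"
        using \<open>F N \<le> u\<close> \<open>0 < F N\<close> B[of z] nonneg[of z] by (intro mult_left_mono) auto
      also have "\<dots> \<le> K' * u" using u by (intro mult_right_mono) (auto simp: K'_def)
      finally show ?thesis .
    qed
    finally show ?thesis .
  qed
  then show "\<exists>K. \<forall>u\<in>{0<..<1}. J u \<le> K * u" by (intro exI[of _ K']) simp
next
  assume "\<exists>K. \<forall>u\<in>{0<..<1}. J u \<le> K * u"
  then obtain K where K: "\<forall>u\<in>{0<..<1}. J u \<le> K * u" by blast
  have "\<forall>\<^sub>F z in from_above (zmin p). hazard2 p z \<le> K"
    using eventually_cdf_lower_half
  proof eventually_elim
    case (elim z)
    then show ?case using K[rule_format, of "F z"] Jfun_cdf[of z] by (simp add: hazard2_le_iff_lower)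
  qed
  then show "\<exists>K. \<forall>\<^sub>F z in from_above (zmin p). hazard2 p z \<le> K" by blast
qed

lemma hazard_bounded_at_zmax_iff:
  "(\<exists>K. \<forall>\<^sub>F z in from_below (zmax p). hazard2 p z \<le> K) \<longleftrightarrow> (\<exists>K. \<forall>u\<in>{0<..<1}. J u \<le> K * (1 - u))"
proof
  assume "\<exists>K. \<forall>\<^sub>F z in from_below (zmax p). hazard2 p z \<le> K"
  then obtain K where K: "\<forall>\<^sub>F z in from_below (zmax p). hazard2 p z \<le> K" by blast
  then have "zmax p = \<infinity>" by (rule zmax_eq_infinity_if_hazard_bounded)
  then have "from_below (zmax p) = at_top" by (simp add: from_below_def)
  then have "\<forall>\<^sub>F z in at_top. p z \<le> K * (1 - F z) \<and> F z < 1"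
    using eventually_conj[OF K eventually_cdf_upper_half]
    by (auto elim!: eventually_mono simp: hazard2_le_iff_upper)
  then obtain N where N: "\<And>z. N \<le> z \<Longrightarrow> p z \<le> K * (1 - F z)" and "F N < 1"
    unfolding eventually_at_top_linorder by blast
  obtain B where B: "\<And>x. p x \<le> B" using p_bounded by blast
  define K' where "K' = max K (B / (1 - F N))"
  have "J u \<le> K' * (1 - u)" if u: "0 < u" "u < 1" for u
  proof -
    obtain z where z: "F z = u" using cdf_surj u by blast
    then have "J u = p z" using Jfun_cdf u by auto
    also have "\<dots> \<le> K' * (1 - u)"
    proof (cases "N \<le> z")
      case True
      then have "p z \<le> K * (1 - u)" using N[OF True] z by simp
      also have "\<dots> \<le> K' * (1 - u)" using u by (intro mult_right_mono) (auto simp: K'_def)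
      finally show ?thesis .
    next
      case False
      then have "u \<le> F N" using cdf_mono[of z N] z by simp
      have "p z \<le> B / (1 - F N) * (1 - F N)" using B \<open>F N < 1\<close> by simp
      also have "\<dots> \<le> B / (1 - F N) * (1 - u)"
        using \<open>u \<le> F N\<close> \<open>F N < 1\<close> B[of z] nonneg[of z] by (intro mult_left_mono) auto
      also have "\<dots> \<le> K' * (1 - u)" using u by (intro mult_right_mono) (auto simp: K'_def)
      finally show ?thesis .
    qed
    finally show ?thesis .
  qed
  then show "\<exists>K. \<forall>u\<in>{0<..<1}. J u \<le> K * (1 - u)" by (intro exI[of _ K']) simp
next
  assume "\<exists>K. \<forall>u\<in>{0<..<1}. J u \<le> K * (1 - u)"
  then obtain K where K: "\<forall>u\<in>{0<..<1}. J u \<le> K * (1 - u)" by blast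
  have "\<forall>\<^sub>F z in from_below (zmax p). hazard2 p z \<le> K"
    using eventually_cdf_upper_half
  proof eventually_elim
    case (elim z)
    then show ?case using K[rule_format, of "F z"] Jfun_cdf[of z] by (simp add: hazard2_le_iff_upper)
  qed
  then show "\<exists>K. \<forall>\<^sub>F z in from_below (zmax p). hazard2 p z \<le> K" by blast
qed

end

theorem lemma2p5:
  fixes p :: "real \<Rightarrow> real"
  assumes nonneg: "\<And>z. p z \<ge> 0"
    and integrable: "integrable lborel p"
    and total: "integral\<^sup>L lborel p = 1"
    and unif: "uniformly_continuous_on UNIV p"
  shows "((\<exists>L. (psi_star p \<longlongrightarrow> L) at_bot \<and> L < \<infinity>) \<longleftrightarrow>
            Limsup (from_above (zmin p)) (\<lambda>z. ereal (hazard2 p z)) < \<infinity>)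
       \<and> ((\<exists>L. (psi_star p \<longlongrightarrow> L) at_bot \<and> L < \<infinity>) \<longrightarrow> zmin p = -\<infinity>)
       \<and> ((\<exists>L. (psi_star p \<longlongrightarrow> L) at_top \<and> L > -\<infinity>) \<longleftrightarrow>
            Limsup (from_below (zmax p)) (\<lambda>z. ereal (hazard2 p z)) < \<infinity>)
       \<and> ((\<exists>L. (psi_star p \<longlongrightarrow> L) at_top \<and> L > -\<infinity>) \<longrightarrow> zmax p = \<infinity>)"
proof -
  interpret uc_density p using assms by unfold_locales
  have left: "(\<exists>L. (psi \<longlongrightarrow> L) at_bot \<and> L < \<infinity>)
      \<longleftrightarrow> (\<exists>K. \<forall>\<^sub>F z in from_above (zmin p). hazard2 p z \<le> K)"
    by (subst antimono_tendsto_at_bot_iff[OF psi_antimono])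
      (simp only: psi_bounded_above_iff hazard_bounded_at_zmin_iff)
  have right: "(\<exists>L. (psi \<longlongrightarrow> L) at_top \<and> L > -\<infinity>)
      \<longleftrightarrow> (\<exists>K. \<forall>\<^sub>F z in from_below (zmax p). hazard2 p z \<le> K)"
    by (subst antimono_tendsto_at_top_iff[OF psi_antimono])
      (simp only: psi_bounded_below_iff hazard_bounded_at_zmax_iff)
  have "(\<exists>L. (psi \<longlongrightarrow> L) at_bot \<and> L < \<infinity>) \<longrightarrow> zmin p = -\<infinity>"
    unfolding left using zmin_eq_minfinity_if_hazard_bounded by blast
  moreover have "(\<exists>L. (psi \<longlongrightarrow> L) at_top \<and> L > -\<infinity>) \<longrightarrow> zmax p = \<infinity>"
    unfolding right using zmax_eq_infinity_if_hazard_bounded by blast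
  ultimately show ?thesis
    unfolding Limsup_ereal_less_infinity_iff left right by blast
qed

end
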